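(* Let $H_1,\dots,H_n$ be null hypotheses indexed by $\mathcal V=\{1,\dots,n\}$, and for each $v\in\mathcal V$ let $p_v$ be an observed random variable. Let $\bar{\mathcal S}=\{v: H_v \text{ is true}\}$ and $\mathcal S=\mathcal V\setminus\bar{\mathcal S}$. Let $\mathcal G=(\mathcal V,\mathcal E)$ be a directed acyclic graph such that whenever $H_v$ is false and $w$ is an ancestor of $v$ in $\mathcal G$, $H_w$ is also false (equivalently, if $v\in\bar{\mathcal S}$ then every descendant of $v$ is in $\bar{\mathcal S}$). For each $v$, let $\mathcal C_v$ be the set consisting of $v$ and all its descendants in $\mathcal G$, let $f_v:\mathbb R^{|\mathcal V|}\to\mathbb R$ be an arbitrary (measurable) function, and define \[F_v(c;x_{\mathcal V\setminus\mathcal C_v})=\Pr\big(f_v(u_{\mathcal C_v},x_{\mathcal V\setminus\mathcal C_v})\le c\big),\qquad \tilde p_v=F_v\big(f_v(p_{\mathcal C_v},p_{\mathcal V\setminus\mathcal C_v});p_{\mathcal V\setminus\mathcal C_v}\big),\] where $u_{\mathcal C_v}=\{u_w\}_{w\in\mathcal C_v}$ are i.i.d. $\mathrm{Uniform}[0,1]$. Assume that the null $p$-values $\{p_v\}_{v\in\bar{\mathcal S}}$ are mutually independent and independent of the nonnull $p$-values $\{p_v\}_{v\in\mathcal S}$. (a) If the null $p$-values are i.i.d. $\mathrm{Uniform}[0,1]$, then $\tilde p_v$ is super-uniform for every $v\in\bar{\mathcal S}$. (b) If the null $p$-values are super-uniform and, for every value of $p_{\mathcal V\setminus\mathcal C_v}$,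 $f_v$ is nondecreasing in $p_{\mathcal C_v}$ (entrywise), then $\tilde p_v$ is super-uniform for every $v\in\bar{\mathcal S}$.
   Context: A random variable $X$ is super-uniform if $\Pr(X\le c)\le c$ for all $c\in[0,1]$. *)

theory Defs
  imports "HOL-Probability.Probability"
begin

definition super_uniform :: "'a measure \<Rightarrow> ('a \<Rightarrow> real) \<Rightarrow> bool" where
  "super_uniform M X \<longleftrightarrow> (\<forall>c\<in>{0..1::real}. measure M {x \<in> space M. X x \<le> c} \<le> c)"

definition unif01 :: "real measure" where
  "unif01 = uniform_measure lborel {0..1}"

definition desc_set :: "('i \<times> 'i) set \<Rightarrow> 'i \<Rightarrow> 'i set" where
  "desc_set E v = {v} \<union> {w. (v, w) \<in> E\<^sup>+}"

definition merge_on :: "'i set \<Rightarrow> ('i \<Rightarrow> real) \<Rightarrow> ('i \<Rightarrow> real) \<Rightarrow> ('i \<Rightarrow> real)" where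
  "merge_on C u x = (\<lambda>w. if w \<in> C then u w else x w)"

definition F_fun :: "'i set \<Rightarrow> (('i \<Rightarrow> real) \<Rightarrow> real) \<Rightarrow> real \<Rightarrow> ('i \<Rightarrow> real) \<Rightarrow> real" where
  "F_fun C f c x =
     measure (PiM C (\<lambda>_. unif01)) {u \<in> space (PiM C (\<lambda>_. unif01)). f (merge_on C u x) \<le> c}"

definition ptilde :: "('i \<times> 'i) set \<Rightarrow> ('i \<Rightarrow> ('i \<Rightarrow> real) \<Rightarrow> real)
    \<Rightarrow> ('i \<Rightarrow> 'a \<Rightarrow> real) \<Rightarrow> 'i \<Rightarrow> 'a \<Rightarrow> real" where
  "ptilde E f p v = (\<lambda>\<omega>. F_fun (desc_set E v) (f v) (f v (\<lambda>w. p w \<omega>)) (\<lambda>w. p w \<omega>))"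

end

theory Submission
  imports Defs
begin

(* Fix a null node v and write C = C_v; since descendants of null nodes are null, C consists
   of null nodes. Conditionally on the p-values outside C, the vector p_C has independent
   coordinates with the null marginal laws, and tilde p_v is the function F_v evaluated at its
   own argument f_v(p_C, x). For uniform p_C this is the probability integral transform
   Pr(G(h(U)) <= c) <= c, with G the distribution function of h(U). A super-uniform coordinate
   is a quantile transform q(U) >= U of a uniform one; when f_v is nondecreasing in p_C the
   event {tilde p_v <= c} is a down-set in p_C, hence no more likely under this coupling than
   under uniform p_C. *)

lemma prob_space_unif01: "prob_space unif01"
  unfolding unif01_def by (rule prob_space_uniform_measure) auto

lemma sets_unif01 [simp, measurable_cong]: "sets unif01 = sets borel"
  by (simp add: unif01_def)

lemma space_unif01 [simp]: "space unif01 = UNIV"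
  by (simp add: unif01_def)

lemma unif01_eq_distr_restrict_space:
  "unif01 = distr (restrict_space lborel {0<..<1::real}) borel (\<lambda>u. u)"
proof (rule measure_eqI)
  fix A :: "real set" assume "A \<in> sets unif01"
  then have A: "A \<in> sets borel" by (simp add: unif01_def)
  have endpoints: "A \<inter> {0, 1} \<in> null_sets lborel"
    using A by (intro null_set_Int1 finite_imp_null_set_lborel) auto
  have split: "{0..1} \<inter> A = {0<..<1} \<inter> A \<union> A \<inter> {0, 1}"
    by auto
  have "emeasure unif01 A = emeasure lborel ({0..1} \<inter> A)"
    using A by (simp add: unif01_def divide_ennreal_def)
  also have "\<dots> = emeasure lborel ({0<..<1} \<inter> A)"
    unfolding split using A endpoints by (intro emeasure_Un_null_set) auto
  also have "\<dots> = emeasure (restrict_space lborel {0<..<1}) ({0<..<1} \<inter> A)"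
    by (rule emeasure_restrict_space[symmetric]) auto
  also have "\<dots> = emeasure (distr (restrict_space lborel {0<..<1::real}) borel (\<lambda>u. u)) A"
    using A measurable_restrict_space1[OF measurable_ident_sets[OF sets_lborel]]
    by (subst emeasure_distr) (auto simp: space_restrict_space Int_commute)
  finally show "emeasure unif01 A = emeasure (distr (restrict_space lborel {0<..<1::real}) borel (\<lambda>u. u)) A" .
qed (simp add: unif01_def)

lemma (in real_distribution) measure_cdf_le:
  assumes "0 \<le> c"
  shows "measure M {x. cdf M x \<le> c} \<le> c"
proof -
  interpret cdf_distribution M ..
  let ?U = "I -` {x. C x \<le> c} \<inter> {0<..<1}"
  have U_meas: "?U \<in> sets lborel"
    using measurable_sets[OF measurable_CI, of "{x. C x \<le> c}"]
    by (simp add: sets_restrict_space_iff space_restrict_space)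
  \<comment> \<open>The quantile function satisfies \<open>\<omega> \<le> C (I \<omega>)\<close>, so \<open>C (I \<omega>) \<le> c\<close> forces \<open>\<omega> \<le> c\<close>.\<close>
  have U_sub: "?U \<subseteq> {0<..c}"
  proof
    fix u assume u: "u \<in> ?U"
    then have "u \<le> C (I u)" using pseudoinverse[of u "I u"] by auto
    with u show "u \<in> {0<..c}" by auto
  qed
  have "measure M {x. C x \<le> c} = measure lborel ?U"
    by (subst distr_I_eq_M[symmetric])
       (simp add: measure_distr space_restrict_space measure_restrict_space)
  also have "\<dots> \<le> measure lborel {0<..c}"
    using U_meas U_sub by (intro measure_mono_fmeasurable) (auto simp: fmeasurable_def assms)
  finally show ?thesis using assms by simp
qed

lemma (in prob_space) cdf_distr:
  assumes "X \<in> borel_measurable M"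
  shows "cdf (distr M borel X) t = prob {x \<in> space M. X x \<le> t}"
  using assms by (simp add: cdf_def measure_distr vimage_def Int_def conj_commute)

lemma (in prob_space) super_uniform_iff_cdf:
  assumes "X \<in> borel_measurable M"
  shows "super_uniform M X \<longleftrightarrow> (\<forall>c\<in>{0..1}. cdf (distr M borel X) c \<le> c)"
  using assms by (simp add: super_uniform_def cdf_distr)

lemma (in prob_space) prob_integral_transform_le:
  fixes h :: "'a \<Rightarrow> real"
  assumes h: "h \<in> borel_measurable M" and c: "0 \<le> c"
  shows "prob {x \<in> space M. prob {y \<in> space M. h y \<le> h x} \<le> c} \<le> c"
proof -
  let ?N = "distr M borel h"
  interpret N: cdf_distribution ?N
    using h by (simp add: cdf_distribution_def real_distribution_distr)
  have "{x \<in> space M. prob {y \<in> space M. h y \<le> h x} \<le> c} = h -` {t. N.C t \<le> c} \<inter> space M"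
    using h by (auto simp: cdf_distr)
  moreover have "{t. N.C t \<le> c} \<in> sets borel"
    by measurable
  ultimately have "prob {x \<in> space M. prob {y \<in> space M. h y \<le> h x} \<le> c} = measure ?N {t. N.C t \<le> c}"
    using h by (simp add: measure_distr)
  also have "\<dots> \<le> c"
    using c by (rule N.measure_cdf_le)
  finally show ?thesis .
qed

lemma (in real_distribution) quantile_coupling:
  assumes super: "\<And>t. 0 \<le> t \<Longrightarrow> t \<le> 1 \<Longrightarrow> cdf M t \<le> t"
  obtains q where "q \<in> borel_measurable borel" "distr unif01 borel q = M" "\<And>u. u \<le> q u"
proof -
  interpret cdf_distribution M ..
  let ?\<Omega> = "restrict_space lborel {0<..<1::real}"
  \<comment> \<open>\<open>I\<close> is only meaningful on \<open>(0,1)\<close>; the identity elsewhere keeps \<open>u \<le> q u\<close> everywhere.\<close>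
  define q where "q u = (if u \<in> {0<..<1} then I u else u)" for u
  have q_meas: "q \<in> borel_measurable borel"
    unfolding q_def using measurable_CI
    by (subst measurable_If_restrict_space_iff)
       (auto simp del: greaterThanLessThan_iff intro: measurable_restrict_space1)
  have q_ge: "u \<le> q u" for u
  proof (cases "u \<in> {0<..<1}")
    case True
    then have "u \<le> C (I u)" using pseudoinverse[of u "I u"] by auto
    \<comment> \<open>Hence \<open>I u > 0\<close> since \<open>C 0 \<le> 0\<close>, and \<open>u \<le> C (I u) \<le> I u\<close> unless \<open>I u > 1 > u\<close>.\<close>
    then show ?thesis
      using True super[of 0] super[of "I u"] cdf_nondecreasing[of "I u" 0]
      unfolding q_def by (smt (verit) greaterThanLessThan_iff)
  qed (auto simp: q_def)
  have "distr unif01 borel q = distr ?\<Omega> borel q"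
    unfolding unif01_eq_distr_restrict_space
    using q_meas measurable_restrict_space1[OF measurable_ident_sets[OF sets_lborel]]
    by (subst distr_distr) (auto simp: comp_def)
  also have "\<dots> = distr ?\<Omega> borel I"
    by (rule distr_cong) (auto simp: q_def space_restrict_space)
  also have "\<dots> = M"
    by (rule distr_I_eq_M)
  finally show ?thesis using that q_meas q_ge by blast
qed

lemma borel_measurable_component_PiM:
  assumes "i \<in> I" and "sets (N i) = sets borel"
  shows "(\<lambda>x. x i) \<in> borel_measurable (PiM I N)"
  using measurable_component_singleton[OF assms(1), of N] measurable_cong_sets[OF refl assms(2)]
  by blast

lemma space_PiM_borel_sets:
  assumes "\<And>i. sets (N i) = sets borel"
  shows "space (PiM I N) = space (PiM I (\<lambda>_. borel))"
  using sets_eq_imp_space_eq[OF assms] by (simp add: space_PiM)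

lemma distr_PiM_componentwise:
  assumes I: "finite I"
    and M: "\<And>i. prob_space (M i)" and N: "\<And>i. prob_space (N i)"
    and q_meas: "\<And>i. i \<in> I \<Longrightarrow> q i \<in> measurable (M i) (N i)"
    and q_distr: "\<And>i. i \<in> I \<Longrightarrow> distr (M i) (N i) (q i) = N i"
  shows "distr (PiM I M) (PiM I N) (\<lambda>x. \<lambda>i\<in>I. q i (x i)) = PiM I N"
proof -
  interpret M: product_prob_space M by (rule product_prob_spaceI) (rule M)
  interpret N: product_prob_space N by (rule product_prob_spaceI) (rule N)
  have meas: "(\<lambda>x. \<lambda>i\<in>I. q i (x i)) \<in> measurable (PiM I M) (PiM I N)"
  proof (rule measurable_restrict)
    fix i assume i: "i \<in> I"
    show "(\<lambda>x. q i (x i)) \<in> measurable (PiM I M) (N i)"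
      by (rule measurable_compose[OF measurable_component_singleton[OF i, of M] q_meas[OF i]])
  qed
  show ?thesis
  proof (rule N.PiM_eqI[OF I])
    fix A assume A: "\<And>i. i \<in> I \<Longrightarrow> A i \<in> sets (N i)"
    have "(\<lambda>x. \<lambda>i\<in>I. q i (x i)) -` PiE I A \<inter> space (PiM I M) = PiE I (\<lambda>i. q i -` A i \<inter> space (M i))"
      by (auto simp: space_PiM PiE_def Pi_def extensional_def)
    then have "emeasure (distr (PiM I M) (PiM I N) (\<lambda>x. \<lambda>i\<in>I. q i (x i))) (PiE I A)
        = (\<Prod>i\<in>I. emeasure (M i) (q i -` A i \<inter> space (M i)))"
      using A I meas q_meas by (simp add: emeasure_distr sets_PiM_I_finite M.emeasure_PiM)
    also have "\<dots> = (\<Prod>i\<in>I. emeasure (N i) (A i))"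
    proof (rule prod.cong)
      fix i assume i: "i \<in> I"
      have "emeasure (M i) (q i -` A i \<inter> space (M i)) = emeasure (distr (M i) (N i) (q i)) (A i)"
        using emeasure_distr[OF q_meas[OF i] A[OF i]] by simp
      then show "emeasure (M i) (q i -` A i \<inter> space (M i)) = emeasure (N i) (A i)"
        by (simp only: q_distr[OF i])
    qed simp
    finally show "emeasure (distr (PiM I M) (PiM I N) (\<lambda>x. \<lambda>i\<in>I. q i (x i))) (PiE I A)
        = (\<Prod>i\<in>I. emeasure (N i) (A i))" .
  qed simp
qed

lemma emeasure_PiM_down_closed_le_unif01:
  fixes \<mu> :: "'i \<Rightarrow> real measure"
  assumes C: "finite C"
    and real_distr: "\<And>i. real_distribution (\<mu> i)"
    and super: "\<And>i t. i \<in> C \<Longrightarrow> 0 \<le> t \<Longrightarrow> t \<le> 1 \<Longrightarrow> cdf (\<mu> i) t \<le> t"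
    and D: "D \<in> sets (PiM C (\<lambda>_. borel))"
    and down: "\<And>x y. x \<in> D \<Longrightarrow> y \<in> space (PiM C (\<lambda>_. borel)) \<Longrightarrow> (\<forall>i\<in>C. y i \<le> x i) \<Longrightarrow> y \<in> D"
  shows "emeasure (PiM C \<mu>) D \<le> emeasure (PiM C (\<lambda>_. unif01)) D"
proof -
  have sets_\<mu>: "sets (\<mu> i) = sets borel" for i
    using real_distr[of i] by (simp add: real_distribution_def real_distribution_axioms_def)
  have "\<forall>i\<in>C. \<exists>q. q \<in> borel_measurable borel \<and> distr unif01 borel q = \<mu> i \<and> (\<forall>u. u \<le> q u)"
    by (metis real_distr super real_distribution.quantile_coupling)
  then obtain q where q_meas_borel: "\<And>i. i \<in> C \<Longrightarrow> q i \<in> borel_measurable borel"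
    and q_distr_borel: "\<And>i. i \<in> C \<Longrightarrow> distr unif01 borel (q i) = \<mu> i"
    and q_ge: "\<And>i u. i \<in> C \<Longrightarrow> u \<le> q i u"
    by metis
  have q_meas: "q i \<in> measurable unif01 (\<mu> i)" if "i \<in> C" for i
    using q_meas_borel[OF that] measurable_cong_sets[OF sets_unif01 sets_\<mu>] by simp
  have q_distr: "distr unif01 (\<mu> i) (q i) = \<mu> i" if "i \<in> C" for i
    using q_distr_borel[OF that] distr_cong[OF refl sets_\<mu>, of unif01 "q i" "q i"] by simp
  let ?U = "PiM C (\<lambda>_. unif01)" and ?Q = "\<lambda>x. \<lambda>i\<in>C. q i (x i)"
  have Q_meas: "?Q \<in> measurable ?U (PiM C \<mu>)"
    using q_meas by (intro measurable_restrict measurable_compose[OF measurable_component_singleton])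
  have D_sets: "D \<in> sets (PiM C \<mu>)" "D \<in> sets ?U"
    using D sets_\<mu> by (simp_all cong: sets_PiM_cong)
  have "distr ?U (PiM C \<mu>) ?Q = PiM C \<mu>"
    using real_distr
    by (intro distr_PiM_componentwise[OF C prob_space_unif01 _ q_meas q_distr])
       (simp_all add: real_distribution_def)
  then have "emeasure (PiM C \<mu>) D = emeasure ?U (?Q -` D \<inter> space ?U)"
    using emeasure_distr[OF Q_meas D_sets(1)] by simp
  also have "\<dots> \<le> emeasure ?U D"
    using down q_ge D_sets by (intro emeasure_mono) (auto simp: space_PiM)
  finally show ?thesis .
qed

lemma emeasure_pair_measure_le_of_sections:
  assumes "prob_space M1" "prob_space M2" and A: "A \<in> sets (M1 \<Otimes>\<^sub>M M2)"
    and sections: "\<And>y. y \<in> space M2 \<Longrightarrow> emeasure M1 ((\<lambda>x. (x, y)) -` A) \<le> c"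
  shows "emeasure (M1 \<Otimes>\<^sub>M M2) A \<le> c"
proof -
  interpret pair_prob_space M1 M2
    using assms(1,2) by (simp add: pair_prob_space_def pair_sigma_finite_def prob_space_imp_sigma_finite)
  have "emeasure (M1 \<Otimes>\<^sub>M M2) A = (\<integral>\<^sup>+y. emeasure M1 ((\<lambda>x. (x, y)) -` A) \<partial>M2)"
    by (rule emeasure_pair_measure_alt2[OF A])
  also have "\<dots> \<le> (\<integral>\<^sup>+y. c \<partial>M2)"
    by (intro nn_integral_mono sections)
  also have "\<dots> = c"
    by (simp add: M2.emeasure_space_1)
  finally show ?thesis .
qed

lemma emeasure_PiM_le_of_sections:
  assumes M: "\<And>i. prob_space (M i)"
    and JK: "J \<inter> K = {}" "finite J" "finite K" and A: "A \<in> sets (PiM (J \<union> K) M)"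
    and sections: "\<And>x. x \<in> space (PiM J M) \<Longrightarrow>
      emeasure (PiM K M) ((\<lambda>y. merge J K (x, y)) -` A \<inter> space (PiM K M)) \<le> c"
  shows "emeasure (PiM (J \<union> K) M) A \<le> c"
proof -
  interpret product_prob_space M
    by (rule product_prob_spaceI) (rule M)
  interpret J: prob_space "PiM J M"
    by (intro prob_space_PiM M)
  have "emeasure (PiM (J \<union> K) M) A
      = (\<integral>\<^sup>+x. emeasure (PiM K M) ((\<lambda>y. merge J K (x, y)) -` A \<inter> space (PiM K M)) \<partial>PiM J M)"
    by (rule emeasure_fold_integral[OF JK A])
  also have "\<dots> \<le> (\<integral>\<^sup>+x. c \<partial>PiM J M)"
    by (intro nn_integral_mono sections)
  also have "\<dots> = c"
    by (simp add: J.emeasure_space_1)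
  finally show ?thesis .
qed

lemma measurable_merge_on:
  assumes "\<And>w. w \<in> C \<Longrightarrow> (\<lambda>x. u x w) \<in> borel_measurable K"
    and "\<And>w. w \<notin> C \<Longrightarrow> (\<lambda>x. y x w) \<in> borel_measurable K"
  shows "(\<lambda>x. merge_on C (u x) (y x)) \<in> measurable K (PiM UNIV (\<lambda>_. borel))"
  unfolding merge_on_def
proof (rule measurable_PiM_single')
  show "(\<lambda>x. if w \<in> C then u x w else y x w) \<in> borel_measurable K" for w
    by (cases "w \<in> C") (simp_all add: assms)
qed (simp add: PiE_UNIV_domain)

lemma measurable_merge_on_PiM:
  assumes "\<And>i. sets (N i) = sets borel"
  shows "(\<lambda>x. merge_on C x y) \<in> measurable (PiM C N) (PiM UNIV (\<lambda>_. borel))"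
  by (rule measurable_merge_on) (simp_all add: borel_measurable_component_PiM assms)

lemma F_fun_merge_on [simp]: "F_fun C g t (merge_on C u y) = F_fun C g t y"
proof -
  have "merge_on C u' (merge_on C u y) = merge_on C u' y" for u'
    by (auto simp: merge_on_def)
  then show ?thesis by (simp add: F_fun_def)
qed

lemma F_fun_mono:
  assumes g: "g \<in> borel_measurable (PiM UNIV (\<lambda>_. borel))" and "s \<le> t"
  shows "F_fun C g s y \<le> F_fun C g t y"
proof -
  interpret Q: prob_space "PiM C (\<lambda>_. unif01)"
    by (intro prob_space_PiM prob_space_unif01)
  have "(\<lambda>u. g (merge_on C u y)) \<in> borel_measurable (PiM C (\<lambda>_. unif01))"
    using measurable_compose[OF measurable_merge_on_PiM g] by simp
  then show ?thesis
    using \<open>s \<le> t\<close> unfolding F_fun_def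
    by (intro Q.finite_measure_mono) (auto intro: measurable_sets_borel)
qed

lemma measurable_F_fun_diag:
  fixes g :: "('i \<Rightarrow> real) \<Rightarrow> real"
  assumes g: "g \<in> borel_measurable (PiM UNIV (\<lambda>_. borel))"
  shows "(\<lambda>z. F_fun C g (g z) z) \<in> borel_measurable (PiM UNIV (\<lambda>_. borel))"
proof -
  let ?N = "PiM UNIV (\<lambda>_::'i. borel :: real measure)" and ?Q = "PiM C (\<lambda>_::'i. unif01)"
  interpret Q: prob_space ?Q
    by (intro prob_space_PiM prob_space_unif01)
  have "(\<lambda>x. merge_on C (snd x) (fst x)) \<in> measurable (?N \<Otimes>\<^sub>M ?Q) ?N"
    by (rule measurable_merge_on)
       (auto intro: measurable_compose[OF measurable_snd] measurable_compose[OF measurable_fst]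
         borel_measurable_component_PiM)
  then have "(\<lambda>x. g (merge_on C (snd x) (fst x))) \<in> borel_measurable (?N \<Otimes>\<^sub>M ?Q)"
    using g by measurable
  then have S: "{x \<in> space (?N \<Otimes>\<^sub>M ?Q). g (merge_on C (snd x) (fst x)) \<le> g (fst x)} \<in> sets (?N \<Otimes>\<^sub>M ?Q)"
    using g by measurable
  have "F_fun C g (g z) z
      = enn2real (emeasure ?Q (Pair z -` {x \<in> space (?N \<Otimes>\<^sub>M ?Q). g (merge_on C (snd x) (fst x)) \<le> g (fst x)}))"
    for z
    by (auto simp: F_fun_def measure_def space_pair_measure space_PiM PiE_UNIV_domain
        intro!: arg_cong[where f="\<lambda>A. enn2real (emeasure ?Q A)"])
  then show ?thesis
    using borel_measurable_enn2real[OF Q.measurable_emeasure_Pair[OF S]] by simp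
qed

lemma emeasure_F_fun_le_unif01:
  fixes g :: "('i \<Rightarrow> real) \<Rightarrow> real"
  assumes g: "g \<in> borel_measurable (PiM UNIV (\<lambda>_. borel))" and c: "0 \<le> c"
  shows "emeasure (PiM C (\<lambda>_. unif01))
     {x \<in> space (PiM C (\<lambda>_. unif01)). F_fun C g (g (merge_on C x y)) y \<le> c} \<le> ennreal c"
proof -
  let ?Q = "PiM C (\<lambda>_::'i. unif01)"
  interpret Q: prob_space ?Q
    by (intro prob_space_PiM prob_space_unif01)
  have "(\<lambda>x. g (merge_on C x y)) \<in> borel_measurable ?Q"
    using measurable_compose[OF measurable_merge_on_PiM g] by simp
  from Q.prob_integral_transform_le[OF this c]
  show ?thesis by (simp add: F_fun_def Q.emeasure_eq_measure c)
qed

lemma emeasure_F_fun_le_super_uniform: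
  fixes \<mu> :: "'i \<Rightarrow> real measure" and g :: "('i \<Rightarrow> real) \<Rightarrow> real"
  assumes C: "finite C"
    and real_distr: "\<And>i. real_distribution (\<mu> i)"
    and super: "\<And>i t. i \<in> C \<Longrightarrow> 0 \<le> t \<Longrightarrow> t \<le> 1 \<Longrightarrow> cdf (\<mu> i) t \<le> t"
    and g: "g \<in> borel_measurable (PiM UNIV (\<lambda>_. borel))"
    and mono: "\<And>y z. \<forall>w\<in>C. y w \<le> z w \<Longrightarrow> \<forall>w. w \<notin> C \<longrightarrow> y w = z w \<Longrightarrow> g y \<le> g z"
    and c: "0 \<le> c"
  shows "emeasure (PiM C \<mu>)
     {x \<in> space (PiM C \<mu>). F_fun C g (g (merge_on C x y)) y \<le> c} \<le> ennreal c"
proof -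
  let ?B = "PiM C (\<lambda>_::'i. borel :: real measure)"
  define D where "D = {x \<in> space ?B. F_fun C g (g (merge_on C x y)) y \<le> c}"
  have "(\<lambda>x. F_fun C g (g (merge_on C x y)) y) \<in> borel_measurable ?B"
    using measurable_compose[OF measurable_merge_on_PiM[of "\<lambda>_. borel" C y]
        measurable_F_fun_diag[OF g, of C]]
    by simp
  then have D_sets: "D \<in> sets ?B"
    unfolding D_def by (rule borel_measurable_le) simp
  have D_down: "x' \<in> D" if "x \<in> D" "x' \<in> space ?B" "\<forall>i\<in>C. x' i \<le> x i" for x x'
  proof -
    have "g (merge_on C x' y) \<le> g (merge_on C x y)"
      using that(3) by (intro mono) (auto simp: merge_on_def)
    then have "F_fun C g (g (merge_on C x' y)) y \<le> F_fun C g (g (merge_on C x y)) y"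
      by (rule F_fun_mono[OF g])
    then show ?thesis
      using that(1,2) unfolding D_def by auto
  qed
  have sets_\<mu>: "sets (\<mu> i) = sets borel" for i
    using real_distr[of i] by (simp add: real_distribution_def real_distribution_axioms_def)
  have D_eq: "{x \<in> space (PiM C \<mu>). F_fun C g (g (merge_on C x y)) y \<le> c} = D"
    unfolding D_def space_PiM_borel_sets[OF sets_\<mu>] ..
  have D_eq_unif01: "{x \<in> space (PiM C (\<lambda>_. unif01)). F_fun C g (g (merge_on C x y)) y \<le> c} = D"
    unfolding D_def space_PiM_borel_sets[of "\<lambda>_. unif01", OF sets_unif01] ..
  have "emeasure (PiM C \<mu>) D \<le> emeasure (PiM C (\<lambda>_. unif01)) D"
    by (rule emeasure_PiM_down_closed_le_unif01[OF C real_distr super D_sets D_down]) auto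
  also have "\<dots> \<le> ennreal c"
    using emeasure_F_fun_le_unif01[OF g c, of C y] by (simp only: D_eq_unif01)
  finally show ?thesis
    unfolding D_eq .
qed

lemma emeasure_PiM_merge_on_le_of_subset:
  fixes M :: "'i \<Rightarrow> real measure"
  assumes prob_M: "\<And>i. prob_space (M i)" and sets_M: "\<And>i. sets (M i) = sets borel"
    and CJ: "C \<subseteq> J" "finite J" and B: "B \<in> sets (PiM UNIV (\<lambda>_. borel))"
    and sections: "\<And>y. emeasure (PiM C M) {x \<in> space (PiM C M). merge_on C x y \<in> B} \<le> c"
  shows "emeasure (PiM J M) {a \<in> space (PiM J M). merge_on J a b \<in> B} \<le> c"
proof -
  let ?A = "{a \<in> space (PiM J M). merge_on J a b \<in> B}"
  have "(\<lambda>a. merge_on J a b) \<in> measurable (PiM J M) (PiM UNIV (\<lambda>_. borel))"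
    by (rule measurable_merge_on_PiM[OF sets_M])
  then have "?A \<in> sets (PiM ((J - C) \<union> C) M)"
    using B CJ by (simp add: Un_absorb2) measurable
  then have "emeasure (PiM ((J - C) \<union> C) M) ?A \<le> c"
  proof (rule emeasure_PiM_le_of_sections[OF prob_M, rotated 3])
    fix x assume x: "x \<in> space (PiM (J - C) M)"
    have "merge_on J (merge (J - C) C (x, y)) b = merge_on C y (merge_on J x b)" for y
      using CJ by (auto simp: merge_on_def merge_def fun_eq_iff)
    moreover have "merge (J - C) C (x, y) \<in> space (PiM J M)" if "y \<in> space (PiM C M)" for y
      using x that CJ sets_eq_imp_space_eq[OF sets_M] by (auto simp: space_PiM)
    ultimately have "(\<lambda>y. merge (J - C) C (x, y)) -` ?A \<inter> space (PiM C M)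
        = {y \<in> space (PiM C M). merge_on C y (merge_on J x b) \<in> B}"
      by auto
    then show "emeasure (PiM C M) ((\<lambda>y. merge (J - C) C (x, y)) -` ?A \<inter> space (PiM C M)) \<le> c"
      using sections by simp
  qed (use CJ finite_subset in auto)
  then show ?thesis
    using CJ by (simp add: Un_absorb2)
qed

lemma (in prob_space) distr_null_nonnull_eq_pair_measure:
  fixes p :: "'i \<Rightarrow> 'a \<Rightarrow> real"
  assumes p_meas: "\<And>v. p v \<in> borel_measurable M"
    and null_indep: "indep_vars (\<lambda>_. borel) p Sbar" and "Sbar \<noteq> {}"
    and null_nonnull_indep:
      "indep_var (PiM Sbar (\<lambda>_. borel)) (\<lambda>\<omega>. restrict (\<lambda>v. p v \<omega>) Sbar)
         (PiM (UNIV - Sbar) (\<lambda>_. borel)) (\<lambda>\<omega>. restrict (\<lambda>v. p v \<omega>) (UNIV - Sbar))"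
  shows "distr M (PiM Sbar (\<lambda>_. borel) \<Otimes>\<^sub>M PiM (UNIV - Sbar) (\<lambda>_. borel))
      (\<lambda>\<omega>. (restrict (\<lambda>v. p v \<omega>) Sbar, restrict (\<lambda>v. p v \<omega>) (UNIV - Sbar)))
    = PiM Sbar (\<lambda>w. distr M borel (p w))
      \<Otimes>\<^sub>M distr M (PiM (UNIV - Sbar) (\<lambda>_. borel)) (\<lambda>\<omega>. restrict (\<lambda>v. p v \<omega>) (UNIV - Sbar))"
proof -
  have "distr M (PiM Sbar (\<lambda>_. borel)) (\<lambda>\<omega>. restrict (\<lambda>v. p v \<omega>) Sbar)
      = PiM Sbar (\<lambda>w. distr M borel (p w))"
    using indep_vars_iff_distr_eq_PiM'[where I=Sbar and M'="\<lambda>_. borel" and X=p] assms by auto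
  with null_nonnull_indep show ?thesis
    by (simp add: indep_var_distribution_eq)
qed

lemma (in prob_space) emeasure_le_of_null_sections:
  fixes p :: "'i::finite \<Rightarrow> 'a \<Rightarrow> real"
  assumes p_meas: "\<And>v. p v \<in> borel_measurable M"
    and null_indep: "indep_vars (\<lambda>_. borel) p Sbar"
    and null_nonnull_indep:
      "indep_var (PiM Sbar (\<lambda>_. borel)) (\<lambda>\<omega>. restrict (\<lambda>v. p v \<omega>) Sbar)
         (PiM (UNIV - Sbar) (\<lambda>_. borel)) (\<lambda>\<omega>. restrict (\<lambda>v. p v \<omega>) (UNIV - Sbar))"
    and C: "C \<subseteq> Sbar" "C \<noteq> {}"
    and B: "B \<in> sets (PiM UNIV (\<lambda>_. borel))"
    and sections: "\<And>y. emeasure (PiM C (\<lambda>w. distr M borel (p w)))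
      {x \<in> space (PiM C (\<lambda>w. distr M borel (p w))). merge_on C x y \<in> B} \<le> c"
  shows "emeasure M {\<omega> \<in> space M. (\<lambda>w. p w \<omega>) \<in> B} \<le> c"
proof -
  define \<mu> where "\<mu> w = distr M borel (p w)" for w
  let ?BS = "PiM Sbar (\<lambda>_. borel :: real measure)" and ?BN = "PiM (UNIV - Sbar) (\<lambda>_. borel :: real measure)"
  define XS where "XS \<omega> = restrict (\<lambda>v. p v \<omega>) Sbar" for \<omega>
  define XN where "XN \<omega> = restrict (\<lambda>v. p v \<omega>) (UNIV - Sbar)" for \<omega>
  define \<nu> where "\<nu> = distr M ?BN XN"
  have XS_meas: "XS \<in> measurable M ?BS" and XN_meas: "XN \<in> measurable M ?BN"
    unfolding XS_def XN_def by (simp_all add: p_meas measurable_restrict)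
  define S where "S = {z \<in> space (?BS \<Otimes>\<^sub>M ?BN). merge_on Sbar (fst z) (snd z) \<in> B}"
  have "(\<lambda>z. merge_on Sbar (fst z) (snd z)) \<in> measurable (?BS \<Otimes>\<^sub>M ?BN) (PiM UNIV (\<lambda>_. borel))"
    by (rule measurable_merge_on)
       (auto intro: measurable_compose[OF measurable_fst] measurable_compose[OF measurable_snd]
         borel_measurable_component_PiM)
  then have S_sets: "S \<in> sets (?BS \<Otimes>\<^sub>M ?BN)"
    unfolding S_def using B by measurable
  have "sets (PiM Sbar \<mu>) = sets ?BS"
    by (rule sets_PiM_cong) (simp_all add: \<mu>_def)
  then have S_sets': "S \<in> sets (PiM Sbar \<mu> \<Otimes>\<^sub>M \<nu>)"
    using S_sets sets_pair_measure_cong[of "PiM Sbar \<mu>" ?BS \<nu> ?BN] by (simp add: \<nu>_def)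
  have "distr M (?BS \<Otimes>\<^sub>M ?BN) (\<lambda>\<omega>. (XS \<omega>, XN \<omega>)) = PiM Sbar \<mu> \<Otimes>\<^sub>M \<nu>"
    using distr_null_nonnull_eq_pair_measure[OF p_meas null_indep _ null_nonnull_indep] C
    by (auto simp: XS_def[abs_def] XN_def[abs_def] \<mu>_def[abs_def] \<nu>_def)
  moreover have "{\<omega> \<in> space M. (\<lambda>w. p w \<omega>) \<in> B} = (\<lambda>\<omega>. (XS \<omega>, XN \<omega>)) -` S \<inter> space M"
    by (auto simp: S_def XS_def XN_def merge_on_def space_pair_measure space_PiM cong: if_cong)
  ultimately have "emeasure M {\<omega> \<in> space M. (\<lambda>w. p w \<omega>) \<in> B} = emeasure (PiM Sbar \<mu> \<Otimes>\<^sub>M \<nu>) S"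
    using emeasure_distr[OF measurable_Pair[OF XS_meas XN_meas] S_sets] by simp
  also have "\<dots> \<le> c"
  proof (rule emeasure_pair_measure_le_of_sections[OF _ _ S_sets'])
    show "prob_space (PiM Sbar \<mu>)" "prob_space \<nu>"
      unfolding \<mu>_def \<nu>_def by (intro prob_space_PiM prob_space_distr p_meas XN_meas)+
  next
    fix b assume "b \<in> space \<nu>"
    then have "(\<lambda>a. (a, b)) -` S = {a \<in> space (PiM Sbar \<mu>). merge_on Sbar a b \<in> B}"
      by (auto simp: S_def \<nu>_def space_pair_measure space_PiM \<mu>_def)
    also have "emeasure (PiM Sbar \<mu>) \<dots> \<le> c"
    proof (rule emeasure_PiM_merge_on_le_of_subset)
      show "prob_space (\<mu> i)" "sets (\<mu> i) = sets borel" for i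
        by (simp_all add: \<mu>_def prob_space_distr p_meas)
    qed (use C B sections in \<open>simp_all add: \<mu>_def[abs_def]\<close>)
    finally show "emeasure (PiM Sbar \<mu>) ((\<lambda>a. (a, b)) -` S) \<le> c" .
  qed
  finally show ?thesis .
qed

lemma (in prob_space) super_uniform_F_fun_of_null_sections:
  fixes p :: "'i::finite \<Rightarrow> 'a \<Rightarrow> real" and g :: "('i \<Rightarrow> real) \<Rightarrow> real"
  assumes p_meas: "\<And>v. p v \<in> borel_measurable M"
    and null_indep: "indep_vars (\<lambda>_. borel) p Sbar"
    and null_nonnull_indep:
      "indep_var (PiM Sbar (\<lambda>_. borel)) (\<lambda>\<omega>. restrict (\<lambda>v. p v \<omega>) Sbar)
         (PiM (UNIV - Sbar) (\<lambda>_. borel)) (\<lambda>\<omega>. restrict (\<lambda>v. p v \<omega>) (UNIV - Sbar))"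
    and C: "C \<subseteq> Sbar" "C \<noteq> {}"
    and g: "g \<in> borel_measurable (PiM UNIV (\<lambda>_. borel))"
    and sections: "\<And>c y. 0 \<le> c \<Longrightarrow> c \<le> 1 \<Longrightarrow> emeasure (PiM C (\<lambda>w. distr M borel (p w)))
      {x \<in> space (PiM C (\<lambda>w. distr M borel (p w))). F_fun C g (g (merge_on C x y)) y \<le> c} \<le> ennreal c"
  shows "super_uniform M (\<lambda>\<omega>. F_fun C g (g (\<lambda>w. p w \<omega>)) (\<lambda>w. p w \<omega>))"
  unfolding super_uniform_def
proof
  fix c :: real assume c: "c \<in> {0..1}"
  have "{z \<in> space (PiM UNIV (\<lambda>_. borel)). F_fun C g (g z) z \<le> c} \<in> sets (PiM UNIV (\<lambda>_. borel))"
    using measurable_F_fun_diag[OF g] by measurable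
  then have "emeasure M {\<omega> \<in> space M. (\<lambda>w. p w \<omega>) \<in> {z. F_fun C g (g z) z \<le> c}} \<le> ennreal c"
    using c sections
    by (intro emeasure_le_of_null_sections[OF p_meas null_indep null_nonnull_indep C])
       (simp_all add: space_PiM PiE_UNIV_domain)
  then show "prob {\<omega> \<in> space M. F_fun C g (g (\<lambda>w. p w \<omega>)) (\<lambda>w. p w \<omega>) \<le> c} \<le> c"
    using c by (simp add: emeasure_eq_measure)
qed

theorem lemma1:
  fixes M :: "'a measure"
    and p :: "'i::finite \<Rightarrow> 'a \<Rightarrow> real"
    and E :: "('i \<times> 'i) set"
    and Sbar :: "'i set"
    and f :: "'i \<Rightarrow> ('i \<Rightarrow> real) \<Rightarrow> real"
  assumes "prob_space M"
    and p_meas: "\<And>v. p v \<in> borel_measurable M"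
    and dag: "acyclic E"
    and closed: "\<And>v w. v \<in> Sbar \<Longrightarrow> (v, w) \<in> E\<^sup>+ \<Longrightarrow> w \<in> Sbar"
    and f_meas: "\<And>v. f v \<in> borel_measurable (PiM UNIV (\<lambda>_. borel))"
    and null_indep: "prob_space.indep_vars M (\<lambda>_. borel) p Sbar"
    and null_nonnull_indep:
      "prob_space.indep_var M
         (PiM Sbar (\<lambda>_. borel)) (\<lambda>\<omega>. restrict (\<lambda>v. p v \<omega>) Sbar)
         (PiM (UNIV - Sbar) (\<lambda>_. borel)) (\<lambda>\<omega>. restrict (\<lambda>v. p v \<omega>) (UNIV - Sbar))"
  shows "((\<forall>v\<in>Sbar. distr M borel (p v) = unif01)
            \<longrightarrow> (\<forall>v\<in>Sbar. super_uniform M (ptilde E f p v)))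
       \<and> (((\<forall>v\<in>Sbar. super_uniform M (p v))
            \<and> (\<forall>v y z. (\<forall>w\<in>desc_set E v. y w \<le> z w)
                     \<and> (\<forall>w. w \<notin> desc_set E v \<longrightarrow> y w = z w)
                     \<longrightarrow> f v y \<le> f v z))
            \<longrightarrow> (\<forall>v\<in>Sbar. super_uniform M (ptilde E f p v)))"
proof -
  interpret prob_space M by fact
  have desc_null: "desc_set E v \<subseteq> Sbar" if "v \<in> Sbar" for v
    using closed that by (auto simp: desc_set_def)
  note reduce = super_uniform_F_fun_of_null_sections[OF p_meas null_indep null_nonnull_indep
      desc_null _ f_meas]
  show ?thesis
  proof (intro conjI impI ballI)
    fix v assume "\<forall>v\<in>Sbar. distr M borel (p v) = unif01" and v: "v \<in> Sbar"
    then have "PiM (desc_set E v) (\<lambda>w. distr M borel (p w)) = PiM (desc_set E v) (\<lambda>_. unif01)"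
      using desc_null[OF v] by (intro PiM_cong) auto
    then show "super_uniform M (ptilde E f p v)"
      unfolding ptilde_def using emeasure_F_fun_le_unif01[OF f_meas]
      by (intro reduce[OF v]) (simp_all add: desc_set_def)
  next
    fix v assume super_mono: "(\<forall>v\<in>Sbar. super_uniform M (p v)) \<and>
      (\<forall>v y z. (\<forall>w\<in>desc_set E v. y w \<le> z w) \<and> (\<forall>w. w \<notin> desc_set E v \<longrightarrow> y w = z w)
        \<longrightarrow> f v y \<le> f v z)"
      and v: "v \<in> Sbar"
    have "cdf (distr M borel (p w)) t \<le> t" if "w \<in> desc_set E v" "0 \<le> t" "t \<le> 1" for w t
      using super_mono desc_null[OF v] that by (auto simp: super_uniform_iff_cdf[OF p_meas])
    with super_mono show "super_uniform M (ptilde E f p v)"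
      unfolding ptilde_def by (intro reduce[OF v] emeasure_F_fun_le_super_uniform[OF _ _ _ f_meas])
         (auto simp: desc_set_def real_distribution_distr p_meas)
  qed
qed

end
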